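(* Assume Assumption 1, Assumption 2 and the null hypothesis $H_0:\ T_i(1)=T_i(0)$ for all $i$, and condition on $\boldsymbol{T}(1),\boldsymbol{T}(0)$. Then $$\mathbb{E}\{U\mid\boldsymbol{T}(1),\boldsymbol{T}(0)\}\ \ge\ p_1p_0\Big(\frac{n}{\tilde d+1}\cdot\frac1n\sum_{i=1}^n\tilde G(T_i(0))-1\Big)=p_1p_0\Big(\frac{n\tilde g}{\tilde d+1}-1\Big).$$
   Context: There are $n$ units. Unit $i$ has potential event times $T_i(1),T_i(0)\ge 0$, potential censoring times $C_i(1),C_i(0)\in[0,\infty]$, and treatment indicator $Z_i\in\{0,1\}$; bold letters denote $n$-vectors. Assumption 1: conditional on $\boldsymbol{T}(1),\boldsymbol{T}(0),\boldsymbol{C}(1),\boldsymbol{C}(0)$, the $Z_i$ are i.i.d. Bernoulli$(p_1)$, $p_1=1-p_0\in(0,1)$. Assumption 2: $(\boldsymbol{C}(1),\boldsymbol{C}(0))$ is independent of $(\boldsymbol{T}(1),\boldsymbol{T}(0))$ and the pairs $(C_i(1),C_i(0))$ are i.i.d. across $i$. $G_z(c)=\Pr(C_i(z)\ge c)$, $\tilde G(t)=G_1(t)G_0(t)$. Realized: $W_i=\min\{T_i,C_i\}$, $\Delta_i=\mathbb{1}(T_i\le C_i)$ with $T_i=Z_iT_i(1)+(1-Z_i)T_i(0)$, $C_i=Z_iC_i(1)+(1-Z_i)C_i(0)$. Let $t_1<\dots<t_K$ be the distinct values of $\{T_i(0)\}$, $d_k=\#\{i:T_i(0)=t_k\}$,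 $\tilde d=\max_kd_k$, $\tilde g=n^{-1}\sum_i\tilde G(T_i(0))$. For $1\le k\le K$: $N_{1k},N_{0k}$ the numbers of treated / control units with $W_i\ge t_k$, $N_k=N_{1k}+N_{0k}$, $D_k=\sum_i\Delta_i\mathbb{1}(W_i=t_k)$, $V_k=D_k(N_k-D_k)N_{1k}N_{0k}/\{N_k^2(N_k-1)\}$ (convention $0/0:=0$), $U=\sum_{k=1}^KV_k$. *)

theory Defs
  imports "HOL-Probability.Probability"
begin

text \<open>A sample point omega assigns to each unit i the triple
  (Z_i, C_i(1), C_i(0)); censoring times live in [0,\<infinity>] (type ennreal).
  The potential event times T(1), T(0) are fixed (we condition on them).\<close>

type_synonym sample = "nat \<Rightarrow> bool \<times> ennreal \<times> ennreal"

definition realT :: "(nat \<Rightarrow> real) \<Rightarrow> (nat \<Rightarrow> real) \<Rightarrow> sample \<Rightarrow> nat \<Rightarrow> real" where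
  "realT T1 T0 \<omega> i = (if fst (\<omega> i) then T1 i else T0 i)"

definition realC :: "sample \<Rightarrow> nat \<Rightarrow> ennreal" where
  "realC \<omega> i = (if fst (\<omega> i) then fst (snd (\<omega> i)) else snd (snd (\<omega> i)))"

definition obsW :: "(nat \<Rightarrow> real) \<Rightarrow> (nat \<Rightarrow> real) \<Rightarrow> sample \<Rightarrow> nat \<Rightarrow> ennreal" where
  "obsW T1 T0 \<omega> i = min (ennreal (realT T1 T0 \<omega> i)) (realC \<omega> i)"

definition obsDelta :: "(nat \<Rightarrow> real) \<Rightarrow> (nat \<Rightarrow> real) \<Rightarrow> sample \<Rightarrow> nat \<Rightarrow> bool" where
  "obsDelta T1 T0 \<omega> i \<longleftrightarrow> ennreal (realT T1 T0 \<omega> i) \<le> realC \<omega> i"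

definition atRisk1 :: "nat \<Rightarrow> (nat \<Rightarrow> real) \<Rightarrow> (nat \<Rightarrow> real) \<Rightarrow> sample \<Rightarrow> real \<Rightarrow> nat" where
  "atRisk1 n T1 T0 \<omega> t = card {i \<in> {..<n}. fst (\<omega> i) \<and> ennreal t \<le> obsW T1 T0 \<omega> i}"

definition atRisk0 :: "nat \<Rightarrow> (nat \<Rightarrow> real) \<Rightarrow> (nat \<Rightarrow> real) \<Rightarrow> sample \<Rightarrow> real \<Rightarrow> nat" where
  "atRisk0 n T1 T0 \<omega> t = card {i \<in> {..<n}. \<not> fst (\<omega> i) \<and> ennreal t \<le> obsW T1 T0 \<omega> i}"

definition events :: "nat \<Rightarrow> (nat \<Rightarrow> real) \<Rightarrow> (nat \<Rightarrow> real) \<Rightarrow> sample \<Rightarrow> real \<Rightarrow> nat" where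
  "events n T1 T0 \<omega> t = card {i \<in> {..<n}. obsDelta T1 T0 \<omega> i \<and> obsW T1 T0 \<omega> i = ennreal t}"

text \<open>V_k; real division by zero is 0 in HOL, matching the convention 0/0 := 0.\<close>
definition Vterm :: "nat \<Rightarrow> (nat \<Rightarrow> real) \<Rightarrow> (nat \<Rightarrow> real) \<Rightarrow> sample \<Rightarrow> real \<Rightarrow> real" where
  "Vterm n T1 T0 \<omega> t =
    (let N1 = real (atRisk1 n T1 T0 \<omega> t); N0 = real (atRisk0 n T1 T0 \<omega> t);
         N = N1 + N0; D = real (events n T1 T0 \<omega> t)
     in D * (N - D) * N1 * N0 / (N^2 * (N - 1)))"

definition logrank_U :: "nat \<Rightarrow> (nat \<Rightarrow> real) \<Rightarrow> (nat \<Rightarrow> real) \<Rightarrow> sample \<Rightarrow> real" where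
  "logrank_U n T1 T0 \<omega> = (\<Sum>t \<in> T0 ` {..<n}. Vterm n T1 T0 \<omega> t)"

definition Gsurv1 :: "(ennreal \<times> ennreal) measure \<Rightarrow> ennreal \<Rightarrow> real" where
  "Gsurv1 \<mu> c = measure \<mu> {x \<in> space \<mu>. c \<le> fst x}"

definition Gsurv0 :: "(ennreal \<times> ennreal) measure \<Rightarrow> ennreal \<Rightarrow> real" where
  "Gsurv0 \<mu> c = measure \<mu> {x \<in> space \<mu>. c \<le> snd x}"

definition Gtilde :: "(ennreal \<times> ennreal) measure \<Rightarrow> real \<Rightarrow> real" where
  "Gtilde \<mu> t = Gsurv1 \<mu> (ennreal t) * Gsurv0 \<mu> (ennreal t)"

definition tie_max :: "nat \<Rightarrow> (nat \<Rightarrow> real) \<Rightarrow> nat" where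
  "tie_max n T0 = Max ((\<lambda>t. card {i \<in> {..<n}. T0 i = t}) ` (T0 ` {..<n}))"

definition gtilde :: "nat \<Rightarrow> (ennreal \<times> ennreal) measure \<Rightarrow> (nat \<Rightarrow> real) \<Rightarrow> real" where
  "gtilde n \<mu> T0 = (\<Sum>i<n. Gtilde \<mu> (T0 i)) / real n"

definition design :: "nat \<Rightarrow> real \<Rightarrow> (ennreal \<times> ennreal) measure \<Rightarrow> sample measure" where
  "design n p1 \<mu> = PiM {..<n} (\<lambda>_. measure_pmf (bernoulli_pmf p1) \<Otimes>\<^sub>M \<mu>)"

end

theory Submission
  imports Defs
begin

(* Fix a distinct event time t and record the state of unit i at t as None (not at risk)
   or Some z (at risk in arm z).  Under H_0 these states are independent: a unit with
   T_i(0) >= t is at risk in arm 1 resp. arm 0 with probabilities a = p_1 G_1(t) and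
   b = p_0 G_0(t), every other unit is not at risk, and V_t = N_1 N_0 w(S) for a weight w
   depending only on the risk set S.  Given S, the arm labels are i.i.d. with odds a : b,
   hence (a + b)^2 E[N_1 N_0 w(S)] = a b E[N (N - 1) w(S)].  Moreover
   N (N - 1) w(S) = D (N - D) / N >= D / (d~ + 1) as soon as a unit with a later event
   time is at risk, which happens with probability a + b.  This gives
   E V_t >= p_1 p_0 G~(t) d_t / (d~ + 1) for every t except the largest one, where
   E V_t >= 0 loses at most p_1 p_0; summing over t proves the bound. *)

section \<open>Products of finitely supported distributions\<close>

lemma finite_set_Pi_pmf:
  fixes p :: "'i \<Rightarrow> 'b::finite pmf"
  assumes "finite I"
  shows "finite (set_pmf (Pi_pmf I d p))"
  by (rule finite_subset[OF set_Pi_pmf_subset'[OF assms]]) (auto intro: assms)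

lemma integrable_Pi_pmf_finite [simp]:
  fixes p :: "'i \<Rightarrow> 'b::finite pmf" and f :: "('i \<Rightarrow> 'b) \<Rightarrow> real"
  assumes "finite I"
  shows "integrable (measure_pmf (Pi_pmf I d p)) f"
  by (rule integrable_measure_pmf_finite[OF finite_set_Pi_pmf[OF assms]])

lemma expectation_Pi_pmf_split_coordinate:
  fixes p :: "'i \<Rightarrow> 'b::finite pmf" and G :: "('i \<Rightarrow> 'b) \<Rightarrow> real"
  assumes "finite I" "j \<in> I"
  shows "measure_pmf.expectation (Pi_pmf I d p) G
       = (\<Sum>a\<in>UNIV. pmf (p j) a * measure_pmf.expectation (Pi_pmf I d p) (\<lambda>x. G (x(j := a))))"
proof -
  define A where "A = I - {j}"
  have A: "I = insert j A" "finite A" "j \<notin> A" using assms by (auto simp: A_def)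
  have expand: "measure_pmf.expectation (Pi_pmf I d p) F
      = (\<Sum>a\<in>UNIV. pmf (p j) a * measure_pmf.expectation (Pi_pmf A d p) (\<lambda>f. F (f(j := a))))"
    for F :: "('i \<Rightarrow> 'b) \<Rightarrow> real"
    unfolding A(1) Pi_pmf_insert'[OF A(2,3)] map_pmf_def[symmetric]
    by (subst pmf_expectation_bind[where A = UNIV]) (auto simp: finite_set_Pi_pmf[OF A(2)])
  show ?thesis
    by (simp add: expand[of G] expand[of "\<lambda>x. G (x(j := _))"] sum_pmf_eq_1 flip: sum_distrib_right)
qed

lemma expectation_Pi_pmf_condition:
  fixes p :: "'i \<Rightarrow> 'b::finite pmf" and G :: "('i \<Rightarrow> 'b) \<Rightarrow> real"
  assumes "finite I" "j \<in> I"
  shows "measure_pmf.expectation (Pi_pmf I d p) (\<lambda>x. if x j = a then G x else 0)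
       = pmf (p j) a * measure_pmf.expectation (Pi_pmf I d p) (\<lambda>x. G (x(j := a)))"
proof -
  have "pmf (p j) b * measure_pmf.expectation (Pi_pmf I d p) (\<lambda>x. if (x(j := b)) j = a then G (x(j := b)) else 0)
      = (if b = a then pmf (p j) a * measure_pmf.expectation (Pi_pmf I d p) (\<lambda>x. G (x(j := a))) else 0)" for b
    by simp
  then show ?thesis
    by (subst expectation_Pi_pmf_split_coordinate[OF assms]) simp
qed

lemma expectation_Pi_pmf_condition_two:
  fixes p :: "'i \<Rightarrow> 'b::finite pmf" and G :: "('i \<Rightarrow> 'b) \<Rightarrow> real"
  assumes "finite I" "j \<in> I" "l \<in> I" "j \<noteq> l"
  shows "measure_pmf.expectation (Pi_pmf I d p) (\<lambda>x. if x j = a \<and> x l = b then G x else 0)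
       = pmf (p j) a * pmf (p l) b * measure_pmf.expectation (Pi_pmf I d p) (\<lambda>x. G (x(j := a, l := b)))"
proof -
  have nested: "(\<lambda>x. if x j = a \<and> x l = b then G x else 0)
      = (\<lambda>x. if x j = a then if x l = b then G x else 0 else 0)"
    by auto
  have "measure_pmf.expectation (Pi_pmf I d p) (\<lambda>x. if x j = a then if x l = b then G x else 0 else 0)
      = pmf (p j) a * measure_pmf.expectation (Pi_pmf I d p) (\<lambda>x. if x l = b then G (x(j := a)) else 0)"
    using expectation_Pi_pmf_condition[OF assms(1,2), of d p a "\<lambda>x. if x l = b then G x else 0"] assms(4)
    by simp
  also have "\<dots> = pmf (p j) a * pmf (p l) b * measure_pmf.expectation (Pi_pmf I d p) (\<lambda>x. G (x(j := a, l := b)))"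
    using expectation_Pi_pmf_condition[OF assms(1,3), of d p b "\<lambda>x. G (x(j := a))"] assms(4)
    by (simp add: fun_upd_twist)
  finally show ?thesis unfolding nested .
qed

lemma eq_sum_PiE_dflt_indicator:
  fixes G :: "('i \<Rightarrow> 'b::finite) \<Rightarrow> real"
  assumes "finite I" "\<And>i. i \<notin> I \<Longrightarrow> s i = d"
  shows "G s = (\<Sum>x\<in>PiE_dflt I d (\<lambda>_. UNIV). G x * (\<Prod>i\<in>I. if s i = x i then 1 else 0))"
proof -
  have "(\<Prod>i\<in>I. if s i = x i then 1 else 0 :: real) = (if x = s then 1 else 0)"
    if "x \<in> PiE_dflt I d (\<lambda>_. UNIV)" for x
  proof (cases "x = s")
    case False
    then obtain j where "x j \<noteq> s j" by auto
    moreover from this have "j \<in> I" using that assms(2) unfolding PiE_dflt_def by (cases "j \<in> I") auto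
    ultimately show ?thesis using assms(1) by (auto intro: prod_zero)
  qed simp
  then have "(\<Sum>x\<in>PiE_dflt I d (\<lambda>_. UNIV). G x * (\<Prod>i\<in>I. if s i = x i then 1 else 0))
      = (\<Sum>x\<in>PiE_dflt I d (\<lambda>_. UNIV). if x = s then G x else 0)"
    by (intro sum.cong) auto
  also have "\<dots> = G s"
    using assms by (subst sum.delta[OF finite_PiE_dflt]) (auto simp: PiE_dflt_def)
  finally show ?thesis ..
qed

lemma integral_PiM_eq_expectation_Pi_pmf:
  fixes M :: "'a measure" and st :: "'i \<Rightarrow> 'a \<Rightarrow> 'b::finite" and G :: "('i \<Rightarrow> 'b) \<Rightarrow> real"
  assumes "prob_space M" "finite I"
    and st: "\<And>i. i \<in> I \<Longrightarrow> st i \<in> measurable M (count_space UNIV)"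
    and law: "\<And>i v. i \<in> I \<Longrightarrow> measure M {y \<in> space M. st i y = v} = pmf (p i) v"
  shows "integrable (PiM I (\<lambda>_. M)) (\<lambda>\<omega>. G (\<lambda>i. if i \<in> I then st i (\<omega> i) else d))"
    and "(\<integral>\<omega>. G (\<lambda>i. if i \<in> I then st i (\<omega> i) else d) \<partial>PiM I (\<lambda>_. M))
           = measure_pmf.expectation (Pi_pmf I d p) G"
proof -
  interpret product_prob_space "\<lambda>_. M" by (rule product_prob_spaceI) (rule assms(1))
  interpret M: prob_space M by (rule assms(1))
  define X where "X = PiE_dflt I d (\<lambda>_. UNIV :: 'b set)"
  have finX: "finite X" unfolding X_def using assms(2) by auto
  define hit where "hit x i y = (if st i y = x i then 1 else 0 :: real)" for x i y
  have hit_integrable: "integrable M (hit x i)" if "i \<in> I" for x i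
  proof (rule M.integrable_const_bound[where B = 1])
    have "(\<lambda>z. if z = x i then 1 else 0 :: real) \<in> borel_measurable (count_space UNIV)" by simp
    from measurable_comp[OF st[OF that] this] show "hit x i \<in> borel_measurable M"
      unfolding hit_def comp_def .
  qed (simp add: hit_def)
  have integral_hit: "integral\<^sup>L M (hit x i) = pmf (p i) (x i)" if "i \<in> I" for x i
  proof -
    have "integral\<^sup>L M (hit x i) = integral\<^sup>L M (indicator {y \<in> space M. st i y = x i})"
      by (rule Bochner_Integration.integral_cong) (auto simp: hit_def indicator_def)
    then show ?thesis using law[OF that] by (simp add: Int_absorb2)
  qed
  have expand: "G (\<lambda>i. if i \<in> I then st i (\<omega> i) else d) = (\<Sum>x\<in>X. G x * (\<Prod>i\<in>I. hit x i (\<omega> i)))" for \<omega>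
    unfolding X_def hit_def by (subst eq_sum_PiE_dflt_indicator[OF assms(2)]) auto
  have term_integrable: "integrable (PiM I (\<lambda>_. M)) (\<lambda>\<omega>. G x * (\<Prod>i\<in>I. hit x i (\<omega> i)))" for x
    by (intro integrable_mult_right product_integrable_prod assms(2) hit_integrable)
  show "integrable (PiM I (\<lambda>_. M)) (\<lambda>\<omega>. G (\<lambda>i. if i \<in> I then st i (\<omega> i) else d))"
    unfolding expand by (intro Bochner_Integration.integrable_sum term_integrable)
  have "(\<integral>\<omega>. G (\<lambda>i. if i \<in> I then st i (\<omega> i) else d) \<partial>PiM I (\<lambda>_. M))
      = (\<Sum>x\<in>X. G x * (\<Prod>i\<in>I. integral\<^sup>L M (hit x i)))"
    unfolding expand
    by (subst Bochner_Integration.integral_sum[OF term_integrable], subst integral_mult_right_zero,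
        subst product_integral_prod[OF assms(2) hit_integrable]) auto
  also have "\<dots> = (\<Sum>x\<in>X. G x * pmf (Pi_pmf I d p) x)"
    using assms(2) by (intro sum.cong refl) (auto simp: integral_hit X_def PiE_dflt_def pmf_Pi')
  also have "\<dots> = measure_pmf.expectation (Pi_pmf I d p) G"
    by (rule integral_measure_pmf_real[symmetric])
       (use finX set_Pi_pmf_subset[OF assms(2), of d p] in \<open>auto simp: X_def PiE_dflt_def\<close>)
  finally show "(\<integral>\<omega>. G (\<lambda>i. if i \<in> I then st i (\<omega> i) else d) \<partial>PiM I (\<lambda>_. M))
      = measure_pmf.expectation (Pi_pmf I d p) G" .
qed

section \<open>Exchangeability of the arm labels given the risk set\<close>

lemma expectation_two_in_arms:
  fixes p :: "'i \<Rightarrow> bool option pmf" and H :: "'i set \<Rightarrow> real"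
  assumes "finite I" "j \<in> I" "l \<in> I" "j \<noteq> l"
  shows "measure_pmf.expectation (Pi_pmf I d p)
           (\<lambda>x. if x j = Some a \<and> x l = Some b then H {i\<in>I. x i \<noteq> None} else 0)
       = pmf (p j) (Some a) * pmf (p l) (Some b)
           * measure_pmf.expectation (Pi_pmf I d p) (\<lambda>x. H (insert j (insert l {i\<in>I. x i \<noteq> None})))"
proof -
  have "{i\<in>I. (x(j := Some a, l := Some b)) i \<noteq> None} = insert j (insert l {i\<in>I. x i \<noteq> None})" for x
    using assms(2,3) by auto
  then show ?thesis
    using expectation_Pi_pmf_condition_two[OF assms, of d p "Some a" "Some b" "\<lambda>x. H {i\<in>I. x i \<noteq> None}"]
    by simp
qed

lemma expectation_two_at_risk:
  fixes p :: "'i \<Rightarrow> bool option pmf" and H :: "'i set \<Rightarrow> real"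
  assumes "finite I" "j \<in> I" "l \<in> I" "j \<noteq> l"
  shows "measure_pmf.expectation (Pi_pmf I d p)
           (\<lambda>x. if x j \<noteq> None \<and> x l \<noteq> None then H {i\<in>I. x i \<noteq> None} else 0)
       = (pmf (p j) (Some True) + pmf (p j) (Some False)) * (pmf (p l) (Some True) + pmf (p l) (Some False))
           * measure_pmf.expectation (Pi_pmf I d p) (\<lambda>x. H (insert j (insert l {i\<in>I. x i \<noteq> None})))"
proof -
  let ?A = "\<lambda>a b x. if x j = Some a \<and> x l = Some b then H {i\<in>I. x i \<noteq> None} else 0"
  have "(if x j \<noteq> None \<and> x l \<noteq> None then H {i\<in>I. x i \<noteq> None} else 0)
      = ?A True True x + ?A True False x + ?A False True x + ?A False False x" for x
    by (cases "x j"; cases "x l") auto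
  then show ?thesis
    using assms(1) by (simp add: expectation_two_in_arms[OF assms] algebra_simps)
qed

lemma card_times_card_eq_offdiag_sum:
  fixes h :: real
  assumes "finite I"
  shows "real (card {i\<in>I. P i}) * real (card {i\<in>I. Q i}) * h
       = real (card {i\<in>I. P i \<and> Q i}) * h + (\<Sum>j\<in>I. \<Sum>l\<in>I - {j}. if P j \<and> Q l then h else 0)"
proof -
  have ind: "real (card {i\<in>I. R i}) = (\<Sum>i\<in>I. if R i then 1 else 0)" for R
    using assms by (simp add: sum.inter_filter[symmetric])
  have row: "(\<Sum>l\<in>I. if P j \<and> Q l then h else 0)
      = (if P j \<and> Q j then h else 0) + (\<Sum>l\<in>I - {j}. if P j \<and> Q l then h else 0)" if "j \<in> I" for j
    using assms that by (simp add: sum.remove)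
  have "real (card {i\<in>I. P i}) * real (card {i\<in>I. Q i}) * h = (\<Sum>j\<in>I. \<Sum>l\<in>I. if P j \<and> Q l then h else 0)"
    unfolding ind sum_product sum_distrib_right by (auto simp: sum_distrib_right intro!: sum.cong)
  also have "\<dots> = (\<Sum>j\<in>I. if P j \<and> Q j then h else 0) + (\<Sum>j\<in>I. \<Sum>l\<in>I - {j}. if P j \<and> Q l then h else 0)"
    by (simp add: row sum.distrib)
  also have "(\<Sum>j\<in>I. if P j \<and> Q j then h else 0) = real (card {i\<in>I. P i \<and> Q i}) * h"
    unfolding ind sum_distrib_right by (intro sum.cong) auto
  finally show ?thesis .
qed

lemma expectation_pair_arms_symmetric:
  fixes p :: "'i \<Rightarrow> bool option pmf" and H :: "'i set \<Rightarrow> real"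
  assumes "finite I" "j \<in> I" "l \<in> I" "j \<noteq> l"
    and odds: "pmf (p j) (Some True) * \<beta> = pmf (p j) (Some False) * \<alpha>"
      "pmf (p l) (Some True) * \<beta> = pmf (p l) (Some False) * \<alpha>"
  shows "(\<alpha> + \<beta>)^2 * measure_pmf.expectation (Pi_pmf I d p)
           (\<lambda>x. if x j = Some True \<and> x l = Some False then H {i\<in>I. x i \<noteq> None} else 0)
       = \<alpha> * \<beta> * measure_pmf.expectation (Pi_pmf I d p)
           (\<lambda>x. if x j \<noteq> None \<and> x l \<noteq> None then H {i\<in>I. x i \<noteq> None} else 0)"
proof -
  let ?K = "measure_pmf.expectation (Pi_pmf I d p) (\<lambda>x. H (insert j (insert l {i\<in>I. x i \<noteq> None})))"
  have j: "\<alpha> * (pmf (p j) (Some True) + pmf (p j) (Some False)) = pmf (p j) (Some True) * (\<alpha> + \<beta>)"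
    using odds(1) by (simp add: algebra_simps)
  have l: "\<beta> * (pmf (p l) (Some True) + pmf (p l) (Some False)) = pmf (p l) (Some False) * (\<alpha> + \<beta>)"
    using odds(2) by (simp add: algebra_simps)
  have "\<alpha> * \<beta> * measure_pmf.expectation (Pi_pmf I d p)
        (\<lambda>x. if x j \<noteq> None \<and> x l \<noteq> None then H {i\<in>I. x i \<noteq> None} else 0)
      = (\<alpha> * (pmf (p j) (Some True) + pmf (p j) (Some False)))
        * (\<beta> * (pmf (p l) (Some True) + pmf (p l) (Some False))) * ?K"
    by (simp only: expectation_two_at_risk[OF assms(1-4)] mult_ac)
  also have "\<dots> = (\<alpha> + \<beta>)^2 * (pmf (p j) (Some True) * pmf (p l) (Some False) * ?K)"
    by (simp only: j l power2_eq_square mult_ac)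
  also have "\<dots> = (\<alpha> + \<beta>)^2 * measure_pmf.expectation (Pi_pmf I d p)
      (\<lambda>x. if x j = Some True \<and> x l = Some False then H {i\<in>I. x i \<noteq> None} else 0)"
    by (simp only: expectation_two_in_arms[OF assms(1-4)])
  finally show ?thesis ..
qed

lemma expectation_arm_counts_symmetric:
  fixes p :: "'i \<Rightarrow> bool option pmf" and H :: "'i set \<Rightarrow> real"
  assumes "finite I"
    and odds: "\<And>i. i \<in> I \<Longrightarrow> pmf (p i) (Some True) * \<beta> = pmf (p i) (Some False) * \<alpha>"
  shows "(\<alpha> + \<beta>)^2 * measure_pmf.expectation (Pi_pmf I d p) (\<lambda>x.
            real (card {i\<in>I. x i = Some True}) * real (card {i\<in>I. x i = Some False}) * H {i\<in>I. x i \<noteq> None})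
       = \<alpha> * \<beta> * measure_pmf.expectation (Pi_pmf I d p) (\<lambda>x.
            real (card {i\<in>I. x i \<noteq> None}) * (real (card {i\<in>I. x i \<noteq> None}) - 1) * H {i\<in>I. x i \<noteq> None})"
proof -
  let ?E = "measure_pmf.expectation (Pi_pmf I d p)"
  let ?S = "\<lambda>x. {i\<in>I. x i \<noteq> None}"
  have arms: "real (card {i\<in>I. x i = Some True}) * real (card {i\<in>I. x i = Some False}) * h
      = (\<Sum>j\<in>I. \<Sum>l\<in>I - {j}. if x j = Some True \<and> x l = Some False then h else 0)" for x h
  proof -
    have "{i\<in>I. x i = Some True \<and> x i = Some False} = {}" by auto
    then show ?thesis
      using card_times_card_eq_offdiag_sum[OF assms(1), of "\<lambda>i. x i = Some True" "\<lambda>i. x i = Some False" h]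
      by (simp only: card.empty of_nat_0 mult_zero_left add_0_left)
  qed
  have risk: "real (card (?S x)) * (real (card (?S x)) - 1) * h
      = (\<Sum>j\<in>I. \<Sum>l\<in>I - {j}. if x j \<noteq> None \<and> x l \<noteq> None then h else 0)" for x h
    using card_times_card_eq_offdiag_sum[OF assms(1), of "\<lambda>i. x i \<noteq> None" "\<lambda>i. x i \<noteq> None" h]
    by (simp only: conj_absorb left_diff_distrib right_diff_distrib mult_1_right)
  have linear: "?E (\<lambda>x. \<Sum>j\<in>I. \<Sum>l\<in>I - {j}. f j l x) = (\<Sum>j\<in>I. \<Sum>l\<in>I - {j}. ?E (f j l))"
    for f :: "'i \<Rightarrow> 'i \<Rightarrow> ('i \<Rightarrow> bool option) \<Rightarrow> real"
    using assms(1) by (simp add: Bochner_Integration.integral_sum)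
  have "(\<alpha> + \<beta>)^2 * (\<Sum>j\<in>I. \<Sum>l\<in>I - {j}.
          ?E (\<lambda>x. if x j = Some True \<and> x l = Some False then H (?S x) else 0))
      = \<alpha> * \<beta> * (\<Sum>j\<in>I. \<Sum>l\<in>I - {j}.
          ?E (\<lambda>x. if x j \<noteq> None \<and> x l \<noteq> None then H (?S x) else 0))"
    unfolding sum_distrib_left using assms(1) odds
    by (intro sum.cong refl expectation_pair_arms_symmetric) auto
  then show ?thesis
    by (simp only: arms risk linear)
qed

section \<open>The variance term as a function of the unit statuses\<close>

definition logrank_variance :: "nat \<Rightarrow> nat \<Rightarrow> nat \<Rightarrow> real" where
  "logrank_variance N1 N0 D = real D * (real N1 + real N0 - real D) * real N1 * real N0
     / ((real N1 + real N0)^2 * (real N1 + real N0 - 1))"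

definition status_variance :: "'i set \<Rightarrow> 'i set \<Rightarrow> ('i \<Rightarrow> bool option) \<Rightarrow> real" where
  "status_variance I E x = logrank_variance
     (card {i\<in>I. x i = Some True}) (card {i\<in>I. x i = Some False}) (card {i\<in>E. x i \<noteq> None})"

definition risk_weight :: "'i set \<Rightarrow> 'i set \<Rightarrow> real" where
  "risk_weight E S = real (card (S \<inter> E)) * real (card (S - E)) / (real (card S)^2 * (real (card S) - 1))"

lemma risk_weight_nonneg: "0 \<le> risk_weight E S"
  unfolding risk_weight_def by (cases "card S") auto

lemma status_variance_eq_risk_weight:
  assumes "finite I" "E \<subseteq> I"
  shows "status_variance I E x = real (card {i\<in>I. x i = Some True}) * real (card {i\<in>I. x i = Some False})
           * risk_weight E {i\<in>I. x i \<noteq> None}"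
proof -
  let ?S = "{i\<in>I. x i \<noteq> None}"
  have "?S = {i\<in>I. x i = Some True} \<union> {i\<in>I. x i = Some False}" by auto
  then have N: "card ?S = card {i\<in>I. x i = Some True} + card {i\<in>I. x i = Some False}"
    using assms(1) by (auto intro: card_Un_disjoint)
  have D: "{i\<in>E. x i \<noteq> None} = ?S \<inter> E" using assms(2) by auto
  have Q: "real (card (?S - E)) = real (card ?S) - real (card (?S \<inter> E))"
    using card_Int_Diff[of ?S E] assms(1) by simp
  show ?thesis
    unfolding status_variance_def logrank_variance_def risk_weight_def D Q N by simp
qed

lemma status_variance_nonneg: "finite I \<Longrightarrow> E \<subseteq> I \<Longrightarrow> 0 \<le> status_variance I E x"
  by (simp add: status_variance_eq_risk_weight risk_weight_nonneg)

lemma risk_weight_lower_bound: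
  assumes "finite S" "card (S \<inter> E) \<le> d" "q \<notin> E"
  shows "real (card (S \<inter> E)) * (if q \<in> S then 1 else 0) / (real d + 1)
       \<le> real (card S) * (real (card S) - 1) * risk_weight E S"
proof (cases "q \<in> S \<and> card (S \<inter> E) \<noteq> 0")
  case True
  define D Q where "D = card (S \<inter> E)" and "Q = card (S - E)"
  have N: "card S = D + Q" unfolding D_def Q_def using card_Int_Diff[OF assms(1)] .
  have DQ: "1 \<le> Q" "1 \<le> D" "D \<le> d"
    using True assms unfolding D_def Q_def by (auto simp: Suc_le_eq card_gt_0_iff)
  have "D \<le> d * Q" using DQ by (metis le_trans mult.right_neutral mult_le_mono2)
  then have "real D + real Q \<le> (real d + 1) * real Q"
    by (metis add_le_mono1 mult_Suc of_nat_Suc of_nat_add of_nat_le_iff of_nat_mult add.commute)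
  then have "1 / (real d + 1) \<le> real Q / (real D + real Q)"
    using DQ by (simp add: field_simps)
  then have bound: "real D / (real d + 1) \<le> real D * real Q / (real D + real Q)"
    by (metis mult_left_mono of_nat_0_le_iff times_divide_eq_right mult.right_neutral)
  have "real (D + Q) - 1 \<noteq> 0" "real (D + Q) \<noteq> 0" using DQ by auto
  then have weight: "real (D + Q) * (real (D + Q) - 1) * (real D * real Q / (real (D + Q)^2 * (real (D + Q) - 1)))
      = real D * real Q / (real D + real Q)"
    by (simp add: power2_eq_square)
  show ?thesis
    using True bound weight unfolding risk_weight_def N D_def[symmetric] Q_def[symmetric] by simp
next
  case False
  have "0 \<le> real (card S) * (real (card S) - 1)"
    by (cases "card S") auto
  with False show ?thesis
    by (auto intro!: mult_nonneg_nonneg risk_weight_nonneg)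
qed

lemma at_risk_pairs_le_risk_weight:
  assumes "finite I" "E \<subseteq> I" "q0 \<in> I - E" "card E \<le> d"
  shows "(\<Sum>i\<in>E. if x i \<noteq> None \<and> x q0 \<noteq> None then 1 else 0) / (real d + 1)
       \<le> real (card {i\<in>I. x i \<noteq> None}) * (real (card {i\<in>I. x i \<noteq> None}) - 1)
           * risk_weight E {i\<in>I. x i \<noteq> None}"
proof -
  let ?S = "{i\<in>I. x i \<noteq> None}"
  have finE: "finite E" using assms(1,2) by (rule finite_subset[rotated])
  have "?S \<inter> E = {i\<in>E. x i \<noteq> None}" using assms(2) by auto
  then have "(\<Sum>i\<in>E. if x i \<noteq> None \<and> x q0 \<noteq> None then 1 else 0)
      = real (card (?S \<inter> E)) * (if q0 \<in> ?S then 1 else 0)"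
    using assms(3) finE by (simp add: sum.inter_filter[symmetric])
  moreover have "card (?S \<inter> E) \<le> d"
    using card_mono[OF finE, of "?S \<inter> E"] assms(4) by auto
  ultimately show ?thesis
    using assms(1,3) by (simp only:) (intro risk_weight_lower_bound, auto)
qed

lemma expectation_at_risk_pairs:
  fixes q :: "bool option pmf" and p :: "'i \<Rightarrow> bool option pmf"
  assumes "finite I" "E \<subseteq> I" "q0 \<in> I - E" "\<And>i. i \<in> insert q0 E \<Longrightarrow> p i = q"
  shows "measure_pmf.expectation (Pi_pmf I d p) (\<lambda>x. \<Sum>i\<in>E. if x i \<noteq> None \<and> x q0 \<noteq> None then 1 else 0)
       = real (card E) * (pmf q (Some True) + pmf q (Some False))^2"
proof -
  have "measure_pmf.expectation (Pi_pmf I d p) (\<lambda>x. if x i \<noteq> None \<and> x q0 \<noteq> None then 1 else 0)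
      = (pmf q (Some True) + pmf q (Some False))^2" if "i \<in> E" for i
    using expectation_two_at_risk[OF assms(1), of i q0 d p "\<lambda>_. 1"] that assms(2-4)
    by (auto simp: power2_eq_square)
  then show ?thesis
    using assms(1) by (simp add: Bochner_Integration.integral_sum)
qed

lemma expectation_status_variance_ge:
  fixes q :: "bool option pmf" and p :: "'i \<Rightarrow> bool option pmf"
  assumes "finite I" "E \<subseteq> I" "q0 \<in> I - E" "card E \<le> d"
    and p: "\<And>i. i \<in> I \<Longrightarrow> p i = q \<or> p i = return_pmf None" "\<And>i. i \<in> insert q0 E \<Longrightarrow> p i = q"
  shows "real (card E) * pmf q (Some True) * pmf q (Some False) / (real d + 1)
       \<le> measure_pmf.expectation (Pi_pmf I None p) (status_variance I E)"
proof -
  define \<alpha> \<beta> where "\<alpha> = pmf q (Some True)" and "\<beta> = pmf q (Some False)"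
  let ?E = "measure_pmf.expectation (Pi_pmf I None p)"
  let ?S = "\<lambda>x. {i\<in>I. x i \<noteq> None}"
  let ?W = "\<lambda>x. real (card (?S x)) * (real (card (?S x)) - 1) * risk_weight E (?S x)"
  let ?pairs = "\<lambda>x. \<Sum>i\<in>E. if x i \<noteq> None \<and> x q0 \<noteq> None then 1 else 0"
  have odds: "pmf (p i) (Some True) * \<beta> = pmf (p i) (Some False) * \<alpha>" if "i \<in> I" for i
    using p(1)[OF that] unfolding \<alpha>_def \<beta>_def by (auto simp: mult.commute)
  have "status_variance I E = (\<lambda>x. real (card {i\<in>I. x i = Some True}) * real (card {i\<in>I. x i = Some False})
      * risk_weight E (?S x))"
    using assms(1,2) by (simp add: status_variance_eq_risk_weight fun_eq_iff)
  then have symmetric: "(\<alpha> + \<beta>)^2 * ?E (status_variance I E) = \<alpha> * \<beta> * ?E ?W"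
    using expectation_arm_counts_symmetric[OF assms(1) odds] by simp
  have "?E (\<lambda>x. ?pairs x / (real d + 1)) \<le> ?E ?W"
    using assms(1-4) by (intro Bochner_Integration.integral_mono at_risk_pairs_le_risk_weight) auto
  then have lower: "real (card E) * (\<alpha> + \<beta>)^2 / (real d + 1) \<le> ?E ?W"
    by (simp only: integral_divide_zero expectation_at_risk_pairs[OF assms(1-3) p(2)] \<alpha>_def \<beta>_def)
  have ab: "0 \<le> \<alpha>" "0 \<le> \<beta>" unfolding \<alpha>_def \<beta>_def by simp_all
  have "(\<alpha> + \<beta>)^2 * (real (card E) * \<alpha> * \<beta> / (real d + 1))
      = \<alpha> * \<beta> * (real (card E) * (\<alpha> + \<beta>)^2 / (real d + 1))"
    by (simp add: field_simps)
  also have "\<dots> \<le> (\<alpha> + \<beta>)^2 * ?E (status_variance I E)"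
    unfolding symmetric using lower ab by (intro mult_left_mono) auto
  finally have main: "(\<alpha> + \<beta>)^2 * (real (card E) * \<alpha> * \<beta> / (real d + 1))
      \<le> (\<alpha> + \<beta>)^2 * ?E (status_variance I E)" .
  show ?thesis
    unfolding \<alpha>_def[symmetric] \<beta>_def[symmetric]
  proof (cases "\<alpha> + \<beta> = 0")
    case True
    then have "\<alpha> = 0" using ab by simp
    then show "real (card E) * \<alpha> * \<beta> / (real d + 1) \<le> ?E (status_variance I E)"
      using assms(1,2) by (simp add: status_variance_nonneg)
  next
    case False
    show "real (card E) * \<alpha> * \<beta> / (real d + 1) \<le> ?E (status_variance I E)"
      using main by (rule mult_left_le_imp_le) (use False in simp)
  qed
qed

section \<open>The randomised design\<close>

definition unit_status :: "real \<Rightarrow> real \<Rightarrow> bool \<times> ennreal \<times> ennreal \<Rightarrow> bool option" where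
  "unit_status t T y =
     (if ennreal t \<le> min (ennreal T) (if fst y then fst (snd y) else snd (snd y)) then Some (fst y) else None)"

definition status_pmf :: "real \<Rightarrow> real \<Rightarrow> real \<Rightarrow> bool option pmf" where
  "status_pmf p1 g1 g0 = bind_pmf (bernoulli_pmf p1)
     (\<lambda>z. map_pmf (\<lambda>r. if r then Some z else None) (bernoulli_pmf (if z then g1 else g0)))"

lemma pmf_status_pmf:
  assumes "0 \<le> p1" "p1 \<le> 1" "0 \<le> g1" "g1 \<le> 1" "0 \<le> g0" "g0 \<le> 1"
  shows "pmf (status_pmf p1 g1 g0) (Some True) = p1 * g1"
    and "pmf (status_pmf p1 g1 g0) (Some False) = (1 - p1) * g0"
    and "pmf (status_pmf p1 g1 g0) None = 1 - p1 * g1 - (1 - p1) * g0"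
proof -
  have pmf_flag: "pmf (map_pmf (\<lambda>r. if r then Some z else None) (bernoulli_pmf g)) v
      = (if v = Some z then g else if v = None then 1 - g else 0)" if "0 \<le> g" "g \<le> 1" for z g v
  proof -
    have "(\<lambda>r. if r then Some z else None) -` {v} = (if v = Some z then {True} else if v = None then {False} else {})"
      by (auto split: if_splits)
    then show ?thesis
      using that by (auto simp: pmf_map measure_pmf_single)
  qed
  show "pmf (status_pmf p1 g1 g0) (Some True) = p1 * g1"
    and "pmf (status_pmf p1 g1 g0) (Some False) = (1 - p1) * g0"
    and "pmf (status_pmf p1 g1 g0) None = 1 - p1 * g1 - (1 - p1) * g0"
    unfolding status_pmf_def pmf_bind using assms by (simp_all add: pmf_flag algebra_simps)
qed

lemma Gsurv_bounds:
  assumes "prob_space \<mu>"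
  shows "0 \<le> Gsurv1 \<mu> c" "Gsurv1 \<mu> c \<le> 1" "0 \<le> Gsurv0 \<mu> c" "Gsurv0 \<mu> c \<le> 1"
  unfolding Gsurv1_def Gsurv0_def using prob_space.prob_le_1[OF assms] by auto

lemma borel_measurable_fst_snd:
  assumes "sets \<mu> = sets (borel :: (ennreal \<times> ennreal) measure)"
  shows "fst \<in> borel_measurable \<mu>" "snd \<in> borel_measurable \<mu>"
proof -
  have "fst \<in> measurable (borel :: (ennreal \<times> ennreal) measure) borel"
    "snd \<in> measurable (borel :: (ennreal \<times> ennreal) measure) borel"
    by (simp_all flip: borel_prod)
  then show "fst \<in> borel_measurable \<mu>" "snd \<in> borel_measurable \<mu>"
    using measurable_cong_sets[OF assms refl] by blast+
qed

lemma measurable_unit_status: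
  assumes "sets \<mu> = sets (borel :: (ennreal \<times> ennreal) measure)"
  shows "unit_status t T \<in> measurable (measure_pmf (bernoulli_pmf p1) \<Otimes>\<^sub>M \<mu>) (count_space UNIV)"
proof -
  have [measurable]: "(\<lambda>y. fst (snd y)) \<in> borel_measurable (measure_pmf (bernoulli_pmf p1) \<Otimes>\<^sub>M \<mu>)"
    "(\<lambda>y. snd (snd y)) \<in> borel_measurable (measure_pmf (bernoulli_pmf p1) \<Otimes>\<^sub>M \<mu>)"
    using borel_measurable_fst_snd[OF assms] by (auto intro: measurable_compose[OF measurable_snd])
  show ?thesis unfolding unit_status_def by measurable
qed

lemma measure_pmf_pair_measure_Times:
  assumes "prob_space \<mu>" "B \<in> sets \<mu>"
  shows "measure (measure_pmf N \<Otimes>\<^sub>M \<mu>) (A \<times> B) = measure_pmf.prob N A * measure \<mu> B"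
proof -
  interpret sigma_finite_measure \<mu> using assms(1) by (rule prob_space_imp_sigma_finite)
  have "emeasure (measure_pmf N \<Otimes>\<^sub>M \<mu>) (A \<times> B) = emeasure (measure_pmf N) A * emeasure \<mu> B"
    by (rule emeasure_pair_measure_Times) (use assms in auto)
  then show ?thesis unfolding measure_def by (simp add: enn2real_mult)
qed

lemma measure_unit_status_Some:
  fixes p1 :: real
  assumes \<mu>: "prob_space \<mu>" "sets \<mu> = sets (borel :: (ennreal \<times> ennreal) measure)"
    and "ennreal t \<le> ennreal T"
  defines "M \<equiv> measure_pmf (bernoulli_pmf p1) \<Otimes>\<^sub>M \<mu>"
  shows "{y \<in> space M. unit_status t T y = Some z} \<in> sets M"
    and "measure M {y \<in> space M. unit_status t T y = Some z}
           = pmf (bernoulli_pmf p1) z * (if z then Gsurv1 \<mu> (ennreal t) else Gsurv0 \<mu> (ennreal t))"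
proof -
  define B where "B = {c \<in> space \<mu>. ennreal t \<le> (if z then fst c else snd c)}"
  have "{c \<in> space \<mu>. ennreal t \<le> fst c} \<in> sets \<mu>" "{c \<in> space \<mu>. ennreal t \<le> snd c} \<in> sets \<mu>"
    using borel_measurable_fst_snd[OF \<mu>(2)] by measurable
  then have B: "B \<in> sets \<mu>"
    unfolding B_def by (cases z) simp_all
  have arm: "{y \<in> space M. unit_status t T y = Some z} = {z} \<times> B"
    unfolding M_def B_def unit_status_def using assms(3) by (auto simp: space_pair_measure split: if_splits)
  show "{y \<in> space M. unit_status t T y = Some z} \<in> sets M"
    unfolding arm unfolding M_def using B by (auto intro: pair_measureI)
  show "measure M {y \<in> space M. unit_status t T y = Some z}
      = pmf (bernoulli_pmf p1) z * (if z then Gsurv1 \<mu> (ennreal t) else Gsurv0 \<mu> (ennreal t))"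
    unfolding arm unfolding M_def measure_pmf_pair_measure_Times[OF \<mu>(1) B]
    by (cases z) (simp_all add: B_def Gsurv1_def Gsurv0_def measure_pmf_single)
qed

lemma measure_unit_status:
  assumes \<mu>: "prob_space \<mu>" "sets \<mu> = sets (borel :: (ennreal \<times> ennreal) measure)"
    and p1: "0 \<le> p1" "p1 \<le> 1" and "0 \<le> t" "0 \<le> T"
  defines "M \<equiv> measure_pmf (bernoulli_pmf p1) \<Otimes>\<^sub>M \<mu>"
  shows "measure M {y \<in> space M. unit_status t T y = v}
       = pmf (if t \<le> T then status_pmf p1 (Gsurv1 \<mu> (ennreal t)) (Gsurv0 \<mu> (ennreal t)) else return_pmf None) v"
proof -
  interpret M: prob_space M
    unfolding M_def by (intro prob_space_pair \<mu>(1) measure_pmf.prob_space_axioms)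
  let ?A = "\<lambda>v. {y \<in> space M. unit_status t T y = v}"
  show ?thesis
  proof (cases "t \<le> T")
    case False
    then have "\<not> ennreal t \<le> ennreal T" using \<open>0 \<le> T\<close> by (simp add: ennreal_le_iff)
    then have "unit_status t T y = None" for y
      by (auto simp: unit_status_def min_le_iff_disj)
    then show ?thesis using False M.prob_space by (cases v) (simp_all add: indicator_def)
  next
    case True
    then have tT: "ennreal t \<le> ennreal T" by (rule ennreal_leI)
    have arm: "?A (Some z) \<in> sets M"
      "measure M (?A (Some z)) = pmf (bernoulli_pmf p1) z * (if z then Gsurv1 \<mu> (ennreal t) else Gsurv0 \<mu> (ennreal t))"
      for z unfolding M_def by (rule measure_unit_status_Some[OF \<mu> tT])+
    have "?A None = space M - (?A (Some True) \<union> ?A (Some False))" by auto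
    then have "measure M (?A None) = 1 - (measure M (?A (Some True)) + measure M (?A (Some False)))"
      using arm(1) by (simp add: M.prob_compl M.finite_measure_Union disjoint_iff)
    moreover have "v = None \<or> v = Some True \<or> v = Some False" by (cases v) auto
    ultimately show ?thesis
      using True arm(2) p1 Gsurv_bounds[OF \<mu>(1)]
      by (auto simp: pmf_status_pmf measure_pmf_single)
  qed
qed

lemma Vterm_eq_status_variance:
  assumes H0: "\<forall>i<n. T1 i = T0 i" and "\<forall>i<n. 0 \<le> T0 i" "0 \<le> t"
  shows "Vterm n T1 T0 \<omega> t = status_variance {..<n} {i\<in>{..<n}. T0 i = t}
           (\<lambda>i. if i \<in> {..<n} then unit_status t (T0 i) (\<omega> i) else None)"
proof -
  let ?x = "\<lambda>i. if i \<in> {..<n} then unit_status t (T0 i) (\<omega> i) else None"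
  let ?C = "\<lambda>i. if fst (\<omega> i) then fst (snd (\<omega> i)) else snd (snd (\<omega> i))"
  have W: "obsW T1 T0 \<omega> i = min (ennreal (T0 i)) (?C i)" if "i < n" for i
    using H0 that by (simp add: obsW_def realT_def realC_def)
  have arm1: "{i\<in>{..<n}. fst (\<omega> i) \<and> ennreal t \<le> obsW T1 T0 \<omega> i} = {i\<in>{..<n}. ?x i = Some True}"
    and arm0: "{i\<in>{..<n}. \<not> fst (\<omega> i) \<and> ennreal t \<le> obsW T1 T0 \<omega> i} = {i\<in>{..<n}. ?x i = Some False}"
    using W by (auto simp: unit_status_def)
  have "obsDelta T1 T0 \<omega> i \<and> obsW T1 T0 \<omega> i = ennreal t \<longleftrightarrow> T0 i = t \<and> ?x i \<noteq> None" if "i < n" for i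
  proof -
    have "obsDelta T1 T0 \<omega> i \<longleftrightarrow> ennreal (T0 i) \<le> ?C i"
      using H0 that by (simp add: obsDelta_def realT_def realC_def)
    moreover have "ennreal (T0 i) = ennreal t \<longleftrightarrow> T0 i = t"
      using assms(2,3) that by (simp add: ennreal_inj)
    ultimately show ?thesis
      using W[OF that] that by (auto simp: unit_status_def min_def)
  qed
  then have events: "{i\<in>{..<n}. obsDelta T1 T0 \<omega> i \<and> obsW T1 T0 \<omega> i = ennreal t}
      = {i\<in>{i\<in>{..<n}. T0 i = t}. ?x i \<noteq> None}"
    by auto
  show ?thesis
    unfolding Vterm_def atRisk1_def atRisk0_def events_def arm1 arm0 events
      status_variance_def logrank_variance_def Let_def ..
qed

lemma integral_Vterm:
  assumes \<mu>: "prob_space \<mu>" "sets \<mu> = sets (borel :: (ennreal \<times> ennreal) measure)"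
    and p1: "0 \<le> p1" "p1 \<le> 1"
    and H0: "\<forall>i<n. T1 i = T0 i" and T0: "\<forall>i<n. 0 \<le> T0 i" and t: "0 \<le> t"
  defines "p \<equiv> \<lambda>i. if t \<le> T0 i then status_pmf p1 (Gsurv1 \<mu> (ennreal t)) (Gsurv0 \<mu> (ennreal t))
                   else return_pmf None"
  shows "integrable (design n p1 \<mu>) (\<lambda>\<omega>. Vterm n T1 T0 \<omega> t)"
    and "(\<integral>\<omega>. Vterm n T1 T0 \<omega> t \<partial>design n p1 \<mu>)
           = measure_pmf.expectation (Pi_pmf {..<n} None p) (status_variance {..<n} {i\<in>{..<n}. T0 i = t})"
proof -
  let ?M = "measure_pmf (bernoulli_pmf p1) \<Otimes>\<^sub>M \<mu>"
  have M: "prob_space ?M" by (intro prob_space_pair \<mu>(1) measure_pmf.prob_space_axioms)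
  have st: "unit_status t (T0 i) \<in> measurable ?M (count_space UNIV)" if "i \<in> {..<n}" for i
    by (rule measurable_unit_status[OF \<mu>(2)])
  have law: "measure ?M {y \<in> space ?M. unit_status t (T0 i) y = v} = pmf (p i) v" if "i \<in> {..<n}" for i v
    unfolding p_def using measure_unit_status[OF \<mu> p1 t] T0 that by simp
  note rep = integral_PiM_eq_expectation_Pi_pmf[OF M finite_lessThan st law, where d = None]
  have V: "(\<lambda>\<omega>. Vterm n T1 T0 \<omega> t) = (\<lambda>\<omega>. status_variance {..<n} {i\<in>{..<n}. T0 i = t}
      (\<lambda>i. if i \<in> {..<n} then unit_status t (T0 i) (\<omega> i) else None))"
    using Vterm_eq_status_variance[OF H0 T0 t] by simp
  show "integrable (design n p1 \<mu>) (\<lambda>\<omega>. Vterm n T1 T0 \<omega> t)"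
    unfolding design_def V by (rule rep(1))
  show "(\<integral>\<omega>. Vterm n T1 T0 \<omega> t \<partial>design n p1 \<mu>)
      = measure_pmf.expectation (Pi_pmf {..<n} None p) (status_variance {..<n} {i\<in>{..<n}. T0 i = t})"
    unfolding design_def V by (rule rep(2))
qed

lemma card_fiber_le_tie_max:
  "t \<in> T0 ` {..<n} \<Longrightarrow> card {i\<in>{..<n}. T0 i = t} \<le> tie_max n T0"
  unfolding tie_max_def by (rule Max_ge) auto

lemma integral_Vterm_lower_bound:
  assumes \<mu>: "prob_space \<mu>" "sets \<mu> = sets (borel :: (ennreal \<times> ennreal) measure)"
    and p1: "0 \<le> p1" "p1 \<le> 1"
    and H0: "\<forall>i<n. T1 i = T0 i" and T0: "\<forall>i<n. 0 \<le> T0 i" and t: "t \<in> T0 ` {..<n}"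
  shows "p1 * (1 - p1) * Gtilde \<mu> t * real (card {i\<in>{..<n}. T0 i = t}) / (real (tie_max n T0) + 1)
           - (if t = Max (T0 ` {..<n}) then p1 * (1 - p1) else 0)
         \<le> (\<integral>\<omega>. Vterm n T1 T0 \<omega> t \<partial>design n p1 \<mu>)"
proof -
  define E d where "E = {i\<in>{..<n}. T0 i = t}" and "d = tie_max n T0"
  define G1 G0 where "G1 = Gsurv1 \<mu> (ennreal t)" and "G0 = Gsurv0 \<mu> (ennreal t)"
  define q where "q = status_pmf p1 G1 G0"
  have t0: "0 \<le> t" using t T0 by auto
  have G: "0 \<le> G1" "G1 \<le> 1" "0 \<le> G0" "G0 \<le> 1"
    unfolding G1_def G0_def using Gsurv_bounds[OF \<mu>(1)] by auto
  have Ed: "card E \<le> d" unfolding E_def d_def using t by (rule card_fiber_le_tie_max)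
  note integral_V = integral_Vterm(2)[OF \<mu> p1 H0 T0 t0, folded E_def G1_def G0_def]
  show ?thesis
  proof (cases "t = Max (T0 ` {..<n})")
    case True
    have "p1 * (1 - p1) * Gtilde \<mu> t * real (card E) \<le> p1 * (1 - p1) * 1 * (real d + 1)"
      using p1 G Ed unfolding Gtilde_def G1_def[symmetric] G0_def[symmetric]
      by (intro mult_mono mult_le_one) auto
    then have "p1 * (1 - p1) * Gtilde \<mu> t * real (card E) / (real d + 1) \<le> p1 * (1 - p1)"
      by (simp add: divide_le_eq)
    moreover have "0 \<le> (\<integral>\<omega>. Vterm n T1 T0 \<omega> t \<partial>design n p1 \<mu>)"
      unfolding integral_V by (intro Bochner_Integration.integral_nonneg status_variance_nonneg) (auto simp: E_def)
    ultimately show ?thesis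
      using True unfolding E_def[symmetric] d_def[symmetric] by simp
  next
    case False
    have "Max (T0 ` {..<n}) \<in> T0 ` {..<n}" using t by (intro Max_in) auto
    then obtain q0 where q0: "q0 < n" "T0 q0 = Max (T0 ` {..<n})" by auto
    with t False have "t < T0 q0" by (metis Max_ge finite_imageI finite_lessThan order_le_less)
    then have "real (card E) * pmf q (Some True) * pmf q (Some False) / (real d + 1)
        \<le> (\<integral>\<omega>. Vterm n T1 T0 \<omega> t \<partial>design n p1 \<mu>)"
      unfolding integral_V using q0(1) Ed
      by (intro expectation_status_variance_ge) (auto simp: E_def q_def)
    then show ?thesis
      using False unfolding pmf_status_pmf[OF p1 G] q_def Gtilde_def G1_def[symmetric] G0_def[symmetric]
      by (simp add: E_def d_def algebra_simps)
  qed
qed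

theorem lemmaA7:
  fixes n :: nat and p1 :: real and \<mu> :: "(ennreal \<times> ennreal) measure"
    and T1 T0 :: "nat \<Rightarrow> real"
  assumes "0 < p1" and "p1 < 1"
    and "prob_space \<mu>" and "sets \<mu> = sets (borel :: (ennreal \<times> ennreal) measure)"
    and "\<forall>i<n. 0 \<le> T0 i" and "\<forall>i<n. 0 \<le> T1 i"
    and H0: "\<forall>i<n. T1 i = T0 i"
  shows "(\<integral>\<omega>. logrank_U n T1 T0 \<omega> \<partial>(design n p1 \<mu>))
           \<ge> p1 * (1 - p1) * (real n * gtilde n \<mu> T0 / (real (tie_max n T0) + 1) - 1)"
proof -
  define c d where "c = p1 * (1 - p1)" and "d = tie_max n T0"
  let ?bound = "\<lambda>t. c * Gtilde \<mu> t * real (card {i\<in>{..<n}. T0 i = t}) / (real d + 1)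
                      - (if t = Max (T0 ` {..<n}) then c else 0)"
  have p1: "0 \<le> p1" "p1 \<le> 1" using assms(1,2) by auto
  have "(\<Sum>t\<in>T0 ` {..<n}. Gtilde \<mu> t * real (card {i\<in>{..<n}. T0 i = t})) = real n * gtilde n \<mu> T0"
    by (simp add: sum.image_gen[of "{..<n}" "\<lambda>i. Gtilde \<mu> (T0 i)" T0] gtilde_def mult.commute)
  moreover have "(\<Sum>t\<in>T0 ` {..<n}. if t = Max (T0 ` {..<n}) then c else 0) \<le> c"
    using assms(1,2) by (simp add: sum.delta' c_def)
  ultimately have "c * (real n * gtilde n \<mu> T0 / (real d + 1) - 1) \<le> (\<Sum>t\<in>T0 ` {..<n}. ?bound t)"
    by (simp add: sum_subtractf sum_divide_distrib[symmetric] sum_distrib_left[symmetric] mult.assoc right_diff_distrib)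
  also have "\<dots> \<le> (\<Sum>t\<in>T0 ` {..<n}. \<integral>\<omega>. Vterm n T1 T0 \<omega> t \<partial>design n p1 \<mu>)"
    unfolding c_def d_def by (intro sum_mono integral_Vterm_lower_bound assms(3,4) p1 H0 assms(5))
  also have "\<dots> = (\<integral>\<omega>. logrank_U n T1 T0 \<omega> \<partial>design n p1 \<mu>)"
    unfolding logrank_U_def using assms(5)
    by (intro Bochner_Integration.integral_sum[symmetric] integral_Vterm(1)[OF assms(3,4) p1 H0 assms(5)]) auto
  finally show ?thesis unfolding c_def d_def .
qed

end
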